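(* Let $a>0$ and let $f$ be a $2a$-periodic function on $\mathbb{R}$ that is $C^\infty$ everywhere except at the points $2a\mathbb{Z}$, and suppose there is $\delta>0$ and a function $\varphi$ analytic on $(-\delta,\delta)$ such that $f(x)=\varphi(x)/x^2$ for $0<|x|<\delta$. Let $I[f]:=\int_{-a}^{a}f(x)\,\mathrm{d}x$, understood as a Hadamard finite-part integral. For $n\in\mathbb{Z}^+$ let $h=a/n$ and $T_n[f]:=h\sum_{i=-n,\ i\neq 0}^{n-1}f(ih)$. Then for every $\mu>0$, $$I[f]=T_n[f]-\frac{\pi^2}{3h}\varphi(0)+\frac{\varphi''(0)\,h}{2}+O(h^\mu)\qquad (h\to 0).$$
   Context: The Hadamard finite-part integral of $\varphi(x)/x^2$ over an interval containing $0$ is the finite part of $\int_{|x|>\epsilon}$ as $\epsilon\to0^+$, i.e. the limit after discarding the term divergent like $2\varphi(0)/\epsilon$. *)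

theory Defs
  imports "HOL-Analysis.Analysis" "HOL-Library.Landau_Symbols"
begin

definition real_analytic_on :: "(real \<Rightarrow> real) \<Rightarrow> real set \<Rightarrow> bool" where
  "real_analytic_on g S \<longleftrightarrow>
     (\<forall>x\<in>S. \<exists>r>0. \<exists>c::nat \<Rightarrow> real. \<forall>y. \<bar>y - x\<bar> < r \<longrightarrow> (\<lambda>k. c k * (y - x) ^ k) sums g y)"

definition smooth_on :: "(real \<Rightarrow> real) \<Rightarrow> real set \<Rightarrow> bool" where
  "smooth_on g S \<longleftrightarrow> (\<forall>k. ((deriv ^^ k) g) differentiable_on S)"

text \<open>Hadamard finite part of the integral of f over [-a,a], where f(x) = phi(x)/x^2 near 0:
  the limit as eps -> 0+ of the integral over eps <= |x| <= a minus the divergent term 2 phi(0)/eps.\<close>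
definition hadamard_fp_has_value :: "real \<Rightarrow> (real \<Rightarrow> real) \<Rightarrow> real \<Rightarrow> real \<Rightarrow> bool" where
  "hadamard_fp_has_value a f phi0 I \<longleftrightarrow>
     ((\<lambda>\<epsilon>. integral {-a..-\<epsilon>} f + integral {\<epsilon>..a} f - 2 * phi0 / \<epsilon>) \<longlongrightarrow> I) (at_right 0)"

definition trap_Tn :: "real \<Rightarrow> (real \<Rightarrow> real) \<Rightarrow> nat \<Rightarrow> real" where
  "trap_Tn a f n = (a / real n) * (\<Sum>i\<in>{-int n..int n - 1} - {0}. f (real_of_int i * (a / real n)))"

end

theory Submission
  imports Defs "HOL-Complex_Analysis.Complex_Analysis" "HOL-Real_Asymp.Real_Asymp" "HOL-Library.Periodic_Fun"
begin

text \<open>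
  With \<open>\<omega> = \<pi>/(2a)\<close>, the \<open>2a\<close>-periodic functions \<open>\<omega>\<^sup>2/sin\<^sup>2(\<omega>x)\<close> and \<open>\<omega> cot(\<omega>x)\<close> have
  principal parts \<open>1/x\<^sup>2\<close> and \<open>1/x\<close> at every pole, so
  \<open>f = reg + \<phi>(0) \<omega>\<^sup>2/sin\<^sup>2(\<omega>x) + \<phi>'(0) \<omega> cot(\<omega>x)\<close> with \<open>reg\<close> smooth and \<open>2a\<close>-periodic;
  near the poles this is the removable singularity theorem applied to the power series of \<open>\<phi>\<close>.
  For a smooth periodic function the rectangle rule over a period has error \<open>O(h\<^sup>m)\<close> for every \<open>m\<close>.
  The singular parts are summed exactly: \<open>\<Sum> csc\<^sup>2(\<pi>k/2n) = (4n\<^sup>2 - 1)/3\<close> (from the reflection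
  and multiplication formulas of the trigamma function) and \<open>\<Sum> cot(\<pi>k/2n) = 0\<close>, their finite-part
  integrals are elementary, and the omitted node contributes \<open>h reg(0) = h (\<phi>''(0)/2 - \<phi>(0) \<omega>\<^sup>2/3)\<close>.
  Collecting terms gives the expansion with \<open>I\<close> the integral of \<open>reg\<close> over \<open>[-a, a]\<close>.
\<close>

section \<open>The rectangle rule for smooth periodic functions\<close>

lemma sum_grid_shift_telescope:
  fixes g :: "real \<Rightarrow> 'a::ab_group_add"
  shows "(\<Sum>j<N. g (x + h + real j * h)) - (\<Sum>j<N. g (x + real j * h)) = g (x + real N * h) - g x"
proof -
  have "(\<Sum>j<N. g (x + h + real j * h)) - (\<Sum>j<N. g (x + real j * h))
        = (\<Sum>j<N. g (x + real (Suc j) * h) - g (x + real j * h))"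
    by (simp add: sum_subtractf algebra_simps)
  also have "\<dots> = g (x + real N * h) - g x"
    by (subst sum_lessThan_telescope[where f = "\<lambda>j. g (x + real j * h)"]) simp
  finally show ?thesis .
qed

lemma sum_shifted_grid_eq_centered:
  fixes g :: "real \<Rightarrow> 'a::comm_monoid_add"
  assumes n: "n \<ge> 1"
  shows "(\<Sum>j<2 * n. g (- a + real j * (a / n))) = (\<Sum>i\<in>{- int n..int n - 1}. g (of_int i * (a / n)))"
proof (rule sum.reindex_bij_witness[where i = "\<lambda>i. nat (i + int n)" and j = "\<lambda>j. int j - int n"])
  fix j assume "j \<in> {..<2 * n}"
  have "- a + real j * (a / n) = of_int (int j - int n) * (a / n)"
    using n by (simp add: field_simps)
  thus "g (of_int (int j - int n) * (a / n)) = g (- a + real j * (a / n))" by simp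
qed auto

lemma bounded_if_continuous_periodic:
  fixes g :: "real \<Rightarrow> real"
  assumes cont: "continuous_on UNIV g" and p: "p > 0" and per: "\<And>x. g (x + p) = g x"
  obtains B where "\<And>x. \<bar>g x\<bar> \<le> B"
proof -
  interpret periodic_fun_simple g p by standard (rule per)
  have "compact (g ` {0..p})"
    by (intro compact_continuous_image continuous_on_subset[OF cont]) auto
  then obtain B where B: "\<And>y. y \<in> {0..p} \<Longrightarrow> \<bar>g y\<bar> \<le> B"
    by (fastforce dest!: compact_imp_bounded simp: bounded_iff)
  show ?thesis
  proof (rule that)
    fix x
    define n where "n = \<lfloor>x / p\<rfloor>"
    have "of_int n \<le> x / p" "x / p < of_int n + 1"
      unfolding n_def by linarith+
    hence "x - of_int n * p \<in> {0..p}"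
      using p by (auto simp: field_simps)
    hence "\<bar>g (x - of_int n * p)\<bar> \<le> B" by (rule B)
    thus "\<bar>g x\<bar> \<le> B" by (simp add: minus_of_int)
  qed
qed

locale periodic_deriv_chain =
  fixes D :: "nat \<Rightarrow> real \<Rightarrow> real" and p :: real
  assumes period_pos: "p > 0"
    and has_deriv: "(D k has_real_derivative D (Suc k) x) (at x)"
    and periodic: "D k (x + p) = D k x"
begin

lemma continuous_on_D: "continuous_on A (D k)"
  using has_deriv by (meson DERIV_isCont continuous_at_imp_continuous_on)

lemma bounded_D:
  obtains B where "\<And>x. \<bar>D k x\<bar> \<le> B"
proof -
  have "continuous_on UNIV (D k)" by (rule continuous_on_D)
  from bounded_if_continuous_periodic[of "D k" p, OF this period_pos periodic] that show ?thesis
    by blast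
qed

definition grid_sum :: "nat \<Rightarrow> nat \<Rightarrow> real \<Rightarrow> real" where
  "grid_sum N k x = p / N * (\<Sum>j<N. D k (x + real j * (p / N)))"

lemma grid_sum_has_deriv: "(grid_sum N k has_real_derivative grid_sum N (Suc k) x) (at x)"
proof -
  have d: "((\<lambda>y. D k (y + real j * (p / N))) has_real_derivative D (Suc k) (x + real j * (p / N))) (at x)"
    for j using DERIV_chain2[OF has_deriv DERIV_add[OF DERIV_ident DERIV_const]] by simp
  show ?thesis unfolding grid_sum_def by (intro DERIV_cmult DERIV_sum d)
qed

lemma grid_sum_shift:
  assumes "N \<ge> 1"
  shows "grid_sum N k (x + p / N) = grid_sum N k x"
proof -
  have "(\<Sum>j<N. D k (x + p / N + real j * (p / N))) - (\<Sum>j<N. D k (x + real j * (p / N)))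
        = D k (x + p) - D k x"
    using sum_grid_shift_telescope[of "D k" x "p / N" N] assms by simp
  thus ?thesis by (simp add: grid_sum_def periodic right_diff_distrib[symmetric])
qed

lemma grid_sum_bound:
  assumes "N \<ge> 1" and B: "\<And>x. \<bar>D k x\<bar> \<le> B"
  shows "\<bar>grid_sum N k x\<bar> \<le> p * B"
proof -
  have "\<bar>grid_sum N k x\<bar> = p / N * \<bar>\<Sum>j<N. D k (x + real j * (p / N))\<bar>"
    unfolding grid_sum_def using period_pos by (simp add: abs_mult)
  also have "\<dots> \<le> p / N * (\<Sum>j<N. \<bar>D k (x + real j * (p / N))\<bar>)"
    using period_pos by (intro mult_left_mono sum_abs) auto
  also have "\<dots> \<le> p / N * (\<Sum>j<N. B)"
    using period_pos by (intro mult_left_mono sum_mono B) auto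
  also have "\<dots> = p * B" using assms(1) by simp
  finally show ?thesis .
qed

text \<open>
  For \<open>k \<ge> 1\<close>, \<open>grid_sum N k\<close> is the derivative of a \<open>p/N\<close>-periodic function, so by Rolle it vanishes
  on every interval of length \<open>p/N\<close>; the mean value theorem then gains a factor \<open>p/N\<close> per derivative.
\<close>

lemma grid_sum_deriv_has_zero:
  assumes "N \<ge> 1"
  obtains z where "x < z" "z < x + p / N" "grid_sum N (Suc k) z = 0"
proof -
  have "x < x + p / N" using assms period_pos by simp
  moreover have "grid_sum N k x = grid_sum N k (x + p / N)" using grid_sum_shift[OF assms] by simp
  ultimately obtain z where z: "x < z" "z < x + p / N" "(grid_sum N k has_real_derivative 0) (at z)"
    using Rolle[of x "x + p / N" "grid_sum N k"] grid_sum_has_deriv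
    by (metis DERIV_isCont continuous_at_imp_continuous_on real_differentiable_def)
  with grid_sum_has_deriv DERIV_unique show ?thesis by (metis that)
qed

lemma grid_sum_deriv_bound:
  assumes N: "N \<ge> 1" and B: "\<And>x. \<bar>D m x\<bar> \<le> B" and k: "1 \<le> k" "k \<le> m"
  shows "\<bar>grid_sum N k x\<bar> \<le> p * B * (p / N) ^ (m - k)"
  using k
proof (induction "m - k" arbitrary: k x)
  case 0
  thus ?case using grid_sum_bound[OF N B] by simp
next
  case (Suc i)
  obtain z where z: "x < z" "z < x + p / N" "grid_sum N k z = 0"
    using grid_sum_deriv_has_zero[OF N, of x "k - 1"] Suc.prems by auto
  have "norm (grid_sum N k x - grid_sum N k z) \<le> p * B * (p / N) ^ (m - Suc k) * norm (x - z)"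
  proof (rule field_differentiable_bound[of UNIV])
    show "(grid_sum N k has_field_derivative grid_sum N (Suc k) y) (at y within UNIV)" for y
      by (rule grid_sum_has_deriv)
    show "norm (grid_sum N (Suc k) y) \<le> p * B * (p / N) ^ (m - Suc k)" for y
      using Suc by simp
  qed auto
  also have "\<dots> \<le> p * B * (p / N) ^ (m - Suc k) * (p / N)"
    using z B[of 0] period_pos by (intro mult_left_mono) auto
  also have "\<dots> = p * B * (p / N) ^ (m - k)"
    using Suc.hyps by (simp add: power_Suc2 Suc_diff_Suc[symmetric])
  finally show ?case using z by simp
qed

text \<open>
  Shifting the grid by \<open>p/N\<close> increases the Riemann sum \<open>W\<close> of an antiderivative by \<open>p/N\<close> times the
  integral over a period, and \<open>W' = grid_sum N 0\<close>; the mean value theorem does the rest.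
\<close>

lemma has_real_derivative_integral_D:
  assumes "c < u"
  shows "((\<lambda>v. integral {c..v} (D 0)) has_real_derivative D 0 u) (at u)"
proof -
  have "((\<lambda>v. integral {c..v} (D 0)) has_real_derivative D 0 u) (at u within {c..u + 1})"
    using assms by (intro integral_has_real_derivative continuous_on_D) auto
  moreover have "at u within {c..u + 1} = at u"
    using assms by (intro at_within_interior) simp
  ultimately show ?thesis by simp
qed

lemma integral_eq_grid_sum:
  assumes N: "N \<ge> 1"
  obtains \<zeta> where "x < \<zeta>" "\<zeta> < x + p / N" "integral {x..x + p} (D 0) = grid_sum N 0 \<zeta>"
proof -
  define h where "h = p / N"
  have h: "0 < h" "real N * h = p"
    using N period_pos by (simp_all add: h_def)
  define P where "P u = integral {x - p..u} (D 0)" for u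
  define W where "W y = h * (\<Sum>j<N. P (y + real j * h))" for y
  have W_deriv: "(W has_real_derivative grid_sum N 0 y) (at y)" if "x \<le> y" for y
  proof -
    have "((\<lambda>y. P (y + real j * h)) has_real_derivative D 0 (y + real j * h)) (at y)" for j
    proof -
      have "0 \<le> real j * h" using h by simp
      hence "x - p < y + real j * h" using that period_pos by linarith
      from DERIV_chain2[OF has_real_derivative_integral_D[OF this] DERIV_add[OF DERIV_ident DERIV_const]]
      show ?thesis by (simp add: P_def)
    qed
    thus ?thesis unfolding W_def grid_sum_def h_def[symmetric] by (intro DERIV_cmult DERIV_sum)
  qed
  have "\<exists>\<zeta>. x < \<zeta> \<and> \<zeta> < x + h \<and> W (x + h) - W x = (x + h - x) * grid_sum N 0 \<zeta>"
    by (rule MVT2) (use h(1) W_deriv in auto)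
  then obtain \<zeta> where \<zeta>: "x < \<zeta>" "\<zeta> < x + h" "W (x + h) - W x = h * grid_sum N 0 \<zeta>"
    by auto
  have "W (x + h) - W x = h * (P (x + p) - P x)"
    unfolding W_def right_diff_distrib[symmetric] sum_grid_shift_telescope h(2) ..
  also have "P (x + p) - P x = integral {x..x + p} (D 0)"
    using Henstock_Kurzweil_Integration.integral_combine[of "x - p" x "x + p" "D 0"] period_pos
    by (simp add: P_def integrable_continuous_real continuous_on_D)
  finally have "integral {x..x + p} (D 0) = grid_sum N 0 \<zeta>" using \<zeta>(3) h(1) by simp
  with \<zeta>(1,2) show ?thesis by (intro that) (simp_all add: h_def)
qed

theorem grid_sum_error:
  assumes m: "m \<ge> 1"
  obtains C where "\<And>N x. N \<ge> 1 \<Longrightarrow> \<bar>grid_sum N 0 x - integral {x..x + p} (D 0)\<bar> \<le> C * (p / N) ^ m"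
proof -
  obtain B where B: "\<And>x. \<bar>D m x\<bar> \<le> B" using bounded_D[where k = m] by blast
  have "\<bar>grid_sum N 0 x - integral {x..x + p} (D 0)\<bar> \<le> p * B * (p / N) ^ m" if N: "N \<ge> 1" for N x
  proof -
    obtain \<zeta> where \<zeta>: "x < \<zeta>" "\<zeta> < x + p / N" "integral {x..x + p} (D 0) = grid_sum N 0 \<zeta>"
      using integral_eq_grid_sum[OF N] .
    have "norm (grid_sum N 0 x - grid_sum N 0 \<zeta>) \<le> p * B * (p / N) ^ (m - 1) * norm (x - \<zeta>)"
    proof (rule field_differentiable_bound[of UNIV])
      show "(grid_sum N 0 has_field_derivative grid_sum N 1 y) (at y within UNIV)" for y
        using grid_sum_has_deriv[of N 0] by simp
      show "norm (grid_sum N 1 y) \<le> p * B * (p / N) ^ (m - 1)" for y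
        using grid_sum_deriv_bound[OF N B, of 1] m by simp
    qed auto
    also have "\<dots> \<le> p * B * (p / N) ^ (m - 1) * (p / N)"
      using \<zeta> B[of 0] period_pos by (intro mult_left_mono) auto
    also have "\<dots> = p * B * (p / N) ^ Suc (m - 1)" by (simp only: power_Suc2 mult.assoc)
    also have "Suc (m - 1) = m" using m by simp
    finally show ?thesis using \<zeta> by simp
  qed
  thus ?thesis by (rule that)
qed

end

section \<open>Sums of \<open>csc\<^sup>2\<close> and \<open>cot\<close> over a uniform grid\<close>

lemma rGamma_reflection_real: "rGamma (x::real) * rGamma (1 - x) = sin (pi * x) / pi"
proof -
  have "complex_of_real (rGamma x * rGamma (1 - x)) = complex_of_real (sin (pi * x) / pi)"
    using rGamma_reflection_complex[of "complex_of_real x"]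
    by (simp add: rGamma_complex_of_real[symmetric] sin_of_real[symmetric])
  thus ?thesis by (simp only: of_real_eq_iff)
qed

lemma Digamma_reflection_real:
  assumes "0 < x" "x < (1::real)"
  shows "Digamma x - Digamma (1 - x) = - pi * cos (pi * x) / sin (pi * x)"
proof -
  have nz1: "x \<notin> \<int>\<^sub>\<le>\<^sub>0" "1 - x \<notin> \<int>\<^sub>\<le>\<^sub>0" using assms by (auto elim!: nonpos_Ints_cases)
  have s: "sin (pi * x) > 0" using assms by (intro sin_gt_zero) auto
  have "((\<lambda>y. rGamma y * rGamma (1 - y)) has_real_derivative
          (-rGamma x * Digamma x) * rGamma (1 - x) + rGamma x * (rGamma (1 - x) * Digamma (1 - x))) (at x)"
    using nz1 by (auto intro!: derivative_eq_intros)
  moreover have "(\<lambda>y. rGamma y * rGamma (1 - y)) = (\<lambda>y::real. sin (pi * y) / pi)"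
    by (simp add: rGamma_reflection_real)
  moreover have "((\<lambda>y::real. sin (pi * y) / pi) has_real_derivative cos (pi * x)) (at x)"
    by (auto intro!: derivative_eq_intros)
  ultimately have "(-rGamma x * Digamma x) * rGamma (1 - x) + rGamma x * (rGamma (1 - x) * Digamma (1 - x))
      = cos (pi * x)" using DERIV_unique by metis
  hence "- (rGamma x * rGamma (1 - x)) * (Digamma x - Digamma (1 - x)) = cos (pi * x)"
    by (simp add: algebra_simps)
  hence "- (sin (pi * x) / pi) * (Digamma x - Digamma (1 - x)) = cos (pi * x)"
    by (simp add: rGamma_reflection_real)
  thus ?thesis using s by (simp add: field_simps)
qed

lemma Trigamma_reflection_real:
  assumes "0 < x" "x < (1::real)"
  shows "Polygamma 1 x + Polygamma 1 (1 - x) = pi\<^sup>2 / (sin (pi * x))\<^sup>2"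
proof -
  have nz1: "x \<notin> \<int>\<^sub>\<le>\<^sub>0" "1 - x \<notin> \<int>\<^sub>\<le>\<^sub>0" using assms by (auto elim!: nonpos_Ints_cases)
  have s: "sin (pi * x) > 0" using assms by (intro sin_gt_zero) auto
  have d1: "((\<lambda>y. Digamma y - Digamma (1 - y)) has_real_derivative
          Polygamma 1 x + Polygamma 1 (1 - x)) (at x)"
    using nz1 by (auto intro!: derivative_eq_intros)
  have d2': "((\<lambda>y::real. - pi * cos (pi * y) / sin (pi * y)) has_real_derivative
          (- pi * (- sin (pi * x) * pi) * sin (pi * x) - - pi * cos (pi * x) * (cos (pi * x) * pi)) / (sin (pi * x) * sin (pi * x))) (at x)"
    using s by (intro derivative_eq_intros refl) auto
  have "(- pi * (- sin (pi * x) * pi) * sin (pi * x) - - pi * cos (pi * x) * (cos (pi * x) * pi))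
        = pi\<^sup>2 * ((sin (pi * x))\<^sup>2 + (cos (pi * x))\<^sup>2)"
    by (simp only: power2_eq_square) algebra
  also have "\<dots> = pi\<^sup>2" by (simp only: sin_cos_squared_add mult_1_right)
  finally have d2: "((\<lambda>y::real. - pi * cos (pi * y) / sin (pi * y)) has_real_derivative
          pi\<^sup>2 / (sin (pi * x))\<^sup>2) (at x)"
    using d2' by (simp add: power2_eq_square)
  have "((\<lambda>y::real. - pi * cos (pi * y) / sin (pi * y)) has_real_derivative
          Polygamma 1 x + Polygamma 1 (1 - x)) (at x)"
    by (rule has_field_derivative_transform_within_open[OF d1, of "{0<..<1}"])
       (use assms Digamma_reflection_real in auto)
  thus ?thesis using d2 DERIV_unique by blast
qed

lemma Trigamma_sums:
  assumes "(x::real) > 0"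
  shows "(\<lambda>j. 1 / (x + real j)\<^sup>2) sums Polygamma 1 x"
proof -
  have "x \<noteq> 0" using assms by simp
  from Polygamma_LIMSEQ[OF this, of 1] show ?thesis
    by (simp add: inverse_eq_divide power2_eq_square)
qed

lemma sum_inverse_squares_regrouped:
  "(\<Sum>k=1..m. \<Sum>j<J. 1 / (real k + real j * real m)\<^sup>2) = (\<Sum>l<J * m. 1 / (real l + 1)\<^sup>2)"
proof -
  have "(\<Sum>l<J * m. 1 / (real l + 1)\<^sup>2) = (\<Sum>j<J. \<Sum>l\<in>{j*m..<j*m+m}. 1 / (real l + 1)\<^sup>2)"
    by (rule sum.nat_group[symmetric])
  also have "\<dots> = (\<Sum>j<J. \<Sum>k=1..m. 1 / (real k + real j * real m)\<^sup>2)"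
  proof (rule sum.cong[OF refl])
    fix j
    show "(\<Sum>l\<in>{j*m..<j*m+m}. 1 / (real l + 1)\<^sup>2) = (\<Sum>k=1..m. 1 / (real k + real j * real m)\<^sup>2)"
      by (rule sum.reindex_bij_witness[where i = "\<lambda>k. k + j*m - 1" and j = "\<lambda>l. l + 1 - j*m"])
         (auto simp: of_nat_diff algebra_simps)
  qed
  also have "\<dots> = (\<Sum>k=1..m. \<Sum>j<J. 1 / (real k + real j * real m)\<^sup>2)" by (rule sum.swap)
  finally show ?thesis by simp
qed

lemma sum_Trigamma_fractions:
  assumes m: "m \<ge> (1::nat)"
  shows "(\<Sum>k=1..m. Polygamma 1 (real k / real m)) = real m ^ 2 * pi\<^sup>2 / 6"
proof -
  define u where "u J = (\<Sum>k=1..m. \<Sum>j<J. 1 / (real k + real j * real m)\<^sup>2)" for J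
  have "(\<lambda>n. \<Sum>l<n. 1 / (real l + 1)\<^sup>2) \<longlonglongrightarrow> pi\<^sup>2 / 6"
    using inverse_squares_sums by (simp add: sums_def add.commute)
  hence "(\<lambda>J. \<Sum>l<J * m. 1 / (real l + 1)\<^sup>2) \<longlonglongrightarrow> pi\<^sup>2 / 6"
    using LIMSEQ_subseq_LIMSEQ[of _ _ "\<lambda>J. J * m"] m
    by (simp add: strict_mono_def o_def)
  moreover have "u = (\<lambda>J. \<Sum>l<J * m. 1 / (real l + 1)\<^sup>2)"
    by (rule ext) (simp only: u_def sum_inverse_squares_regrouped)
  ultimately have L1: "u \<longlonglongrightarrow> pi\<^sup>2 / 6" by simp
  have "u \<longlonglongrightarrow> (\<Sum>k=1..m. Polygamma 1 (real k / real m) / real m ^ 2)"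
    unfolding u_def
  proof (intro tendsto_sum)
    fix k assume k: "k \<in> {1..m}"
    have "(\<lambda>j. 1 / (real k / real m + real j)\<^sup>2) sums Polygamma 1 (real k / real m)"
      using k m by (intro Trigamma_sums) auto
    hence "(\<lambda>j. 1 / (real k / real m + real j)\<^sup>2 / real m ^ 2) sums (Polygamma 1 (real k / real m) / real m ^ 2)"
      by (rule sums_divide)
    moreover have "1 / (real k / real m + real j)\<^sup>2 / real m ^ 2 = 1 / (real k + real j * real m)\<^sup>2" for j
      using m by (simp add: field_simps)
    ultimately show "(\<lambda>J. \<Sum>j<J. 1 / (real k + real j * real m)\<^sup>2) \<longlonglongrightarrow> Polygamma 1 (real k / real m) / real m ^ 2"
      by (simp add: sums_def)
  qed
  with L1 have "(\<Sum>k=1..m. Polygamma 1 (real k / real m) / real m ^ 2) = pi\<^sup>2 / 6"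
    using LIMSEQ_unique by blast
  thus ?thesis using m by (simp add: sum_divide_distrib[symmetric] field_simps)
qed

lemma sum_inverse_sin_squared_fractions:
  assumes m: "m \<ge> (1::nat)"
  shows "(\<Sum>k=1..m-1. 1 / (sin (pi * (real k / real m)))\<^sup>2) = (real m ^ 2 - 1) / 3"
proof -
  have P1: "Polygamma 1 (1::real) = pi\<^sup>2 / 6" using sum_Trigamma_fractions[of 1] by simp
  have "(\<Sum>k=1..m. Polygamma 1 (real k / real m)) =
        (\<Sum>k=1..m-1. Polygamma 1 (real k / real m)) + Polygamma 1 1"
    using m by (cases m) (auto simp: sum.atLeast1_atMost_eq)
  hence S1: "(\<Sum>k=1..m-1. Polygamma 1 (real k / real m)) = (real m ^ 2 - 1) * pi\<^sup>2 / 6"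
    using sum_Trigamma_fractions[OF m] P1 by (simp add: algebra_simps)
  have S2: "(\<Sum>k=1..m-1. Polygamma 1 (1 - real k / real m)) = (\<Sum>k=1..m-1. Polygamma 1 (real k / real m))"
    by (rule sum.reindex_bij_witness[where i = "\<lambda>k. m - k" and j = "\<lambda>k. m - k"])
       (use m in \<open>auto simp: of_nat_diff field_simps\<close>)
  have "(\<Sum>k=1..m-1. pi\<^sup>2 / (sin (pi * (real k / real m)))\<^sup>2) =
        (\<Sum>k=1..m-1. Polygamma 1 (real k / real m) + Polygamma 1 (1 - real k / real m))"
    by (intro sum.cong refl Trigamma_reflection_real[symmetric]) (use m in auto)
  also have "\<dots> = (real m ^ 2 - 1) * pi\<^sup>2 / 3"
    unfolding sum.distrib S2 S1 by (simp add: field_simps)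
  finally have "pi\<^sup>2 * (\<Sum>k=1..m-1. 1 / (sin (pi * (real k / real m)))\<^sup>2) = pi\<^sup>2 * ((real m ^ 2 - 1) / 3)"
    unfolding sum_distrib_left by simp
  thus ?thesis by simp
qed

lemma sum_centered_grid_eq_sum_fractions:
  fixes u :: "real \<Rightarrow> real"
  assumes n: "n \<ge> 1" and per: "\<And>t. u (t + pi) = u t"
  shows "(\<Sum>i\<in>{-int n..int n - 1} - {0}. u (pi * (real_of_int i / (2 * real n))))
       = (\<Sum>k=1..2*n-1. u (pi * (real k / real (2*n))))"
proof (rule sum.reindex_bij_witness[where j = "\<lambda>i. if i < 0 then nat (i + 2 * int n) else nat i"
                                         and i = "\<lambda>k. if k \<ge> n then int k - 2 * int n else int k"])
  fix i assume i: "i \<in> {-int n..int n - 1} - {0}"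
  show "(if (if i < 0 then nat (i + 2 * int n) else nat i) \<ge> n
         then int (if i < 0 then nat (i + 2 * int n) else nat i) - 2 * int n
         else int (if i < 0 then nat (i + 2 * int n) else nat i)) = i"
    using i by auto
  show "(if i < 0 then nat (i + 2 * int n) else nat i) \<in> {1..2*n-1}"
    using i by auto
  show "u (pi * (real (if i < 0 then nat (i + 2 * int n) else nat i) / real (2*n)))
        = u (pi * (real_of_int i / (2 * real n)))"
  proof (cases "i < 0")
    case True
    have "real (nat (i + 2 * int n)) = real_of_int i + 2 * real n" using True i by auto
    hence "pi * (real (nat (i + 2 * int n)) / real (2*n)) = pi * (real_of_int i / (2 * real n)) + pi"
      using n by (simp add: field_simps)
    thus ?thesis using True per by simp
  next
    case False
    thus ?thesis using i by simp
  qed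
next
  fix k assume k: "k \<in> {1..2*n-1}"
  show "(if (if k \<ge> n then int k - 2 * int n else int k) < 0
         then nat ((if k \<ge> n then int k - 2 * int n else int k) + 2 * int n)
         else nat (if k \<ge> n then int k - 2 * int n else int k)) = k"
    using k by auto
  show "(if k \<ge> n then int k - 2 * int n else int k) \<in> {-int n..int n - 1} - {0}"
    using k by auto
qed

lemma sum_cot_fractions_eq_0:
  assumes m: "m \<ge> (1::nat)"
  shows "(\<Sum>k=1..m-1. cos (pi * (real k / real m)) / sin (pi * (real k / real m))) = 0"
proof -
  define S where "S = (\<Sum>k=1..m-1. cos (pi * (real k / real m)) / sin (pi * (real k / real m)))"
  have "S = (\<Sum>k=1..m-1. - (cos (pi * (real k / real m)) / sin (pi * (real k / real m))))"
    unfolding S_def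
  proof (rule sum.reindex_bij_witness[where i = "\<lambda>k. m - k" and j = "\<lambda>k. m - k"])
    fix k assume k: "k \<in> {1..m-1}"
    have "k \<le> m" using k by auto
    hence "real (m - k) = real m - real k" by (simp add: of_nat_diff)
    hence "pi * (real (m - k) / real m) = pi - pi * (real k / real m)"
      using m by (simp add: field_simps)
    thus "- (cos (pi * (real (m - k) / real m)) / sin (pi * (real (m - k) / real m)))
          = cos (pi * (real k / real m)) / sin (pi * (real k / real m))"
      by simp
  qed auto
  also have "\<dots> = - S" unfolding S_def by (simp add: sum_negf)
  finally show ?thesis unfolding S_def[symmetric] by simp
qed

section \<open>Infinitely differentiable functions\<close>

definition infinitely_differentiable_on :: "(real \<Rightarrow> real) \<Rightarrow> real set \<Rightarrow> bool" where
  "infinitely_differentiable_on G S \<longleftrightarrow>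
     (\<forall>k. \<forall>x\<in>S. ((deriv ^^ k) G has_real_derivative (deriv ^^ Suc k) G x) (at x))"

lemma higher_deriv_eq_derivative_chain:
  assumes S: "open S"
    and chain: "\<And>k x. x \<in> S \<Longrightarrow> (w k has_real_derivative w (Suc k) x) (at x)"
    and eq: "\<And>x. x \<in> S \<Longrightarrow> G x = w 0 x" and x: "x \<in> S"
  shows "(deriv ^^ k) G x = w k x"
  using x
proof (induction k arbitrary: x)
  case 0
  thus ?case using eq by simp
next
  case (Suc k)
  have "eventually (\<lambda>z. (deriv ^^ k) G z = w k z) (nhds x)"
    using eventually_nhds_in_open[OF S Suc.prems] by eventually_elim (rule Suc.IH)
  hence "deriv ((deriv ^^ k) G) x = deriv (w k) x" by (rule deriv_cong_ev) simp
  also have "\<dots> = w (Suc k) x" by (rule DERIV_imp_deriv[OF chain[OF Suc.prems]])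
  finally show ?case by simp
qed

lemma infinitely_differentiable_onI:
  assumes S: "open S"
    and w_deriv: "\<And>k x. x \<in> S \<Longrightarrow> (w k has_real_derivative w (Suc k) x) (at x)"
    and G_eq: "\<And>x. x \<in> S \<Longrightarrow> G x = w 0 x"
  shows "infinitely_differentiable_on G S"
  unfolding infinitely_differentiable_on_def
proof (intro allI ballI)
  fix k x assume x: "x \<in> S"
  have w_eq: "(deriv ^^ j) G y = w j y" if "y \<in> S" for j y
    using S w_deriv G_eq that by (rule higher_deriv_eq_derivative_chain)
  have "((deriv ^^ k) G has_real_derivative w (Suc k) x) (at x)"
    by (rule has_field_derivative_transform_within_open[OF w_deriv[OF x] S x]) (simp add: w_eq)
  thus "((deriv ^^ k) G has_real_derivative (deriv ^^ Suc k) G x) (at x)"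
    by (simp only: w_eq[OF x])
qed

lemma smooth_on_imp_infinitely_differentiable_on:
  assumes "smooth_on G S" "open S"
  shows "infinitely_differentiable_on G S"
  unfolding infinitely_differentiable_on_def
proof (intro allI ballI)
  fix k x assume "x \<in> S"
  moreover have "(deriv ^^ k) G differentiable_on S" using assms(1) by (simp add: smooth_on_def)
  ultimately have "(deriv ^^ k) G differentiable (at x)"
    using assms(2) by (simp add: differentiable_on_eq_differentiable_at)
  thus "((deriv ^^ k) G has_real_derivative (deriv ^^ Suc k) G x) (at x)"
    by (simp add: DERIV_deriv_iff_real_differentiable)
qed

lemma infinitely_differentiable_on_cong:
  assumes "open S" "infinitely_differentiable_on G S" "\<And>x. x \<in> S \<Longrightarrow> F x = G x"
  shows "infinitely_differentiable_on F S"
  using assms by (intro infinitely_differentiable_onI[where w = "\<lambda>k. (deriv ^^ k) G"])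
    (auto simp: infinitely_differentiable_on_def)

lemma infinitely_differentiable_on_add_scaled:
  assumes "open S" "infinitely_differentiable_on u S" "infinitely_differentiable_on v S"
  shows "infinitely_differentiable_on (\<lambda>x. u x + c * v x) S"
  using assms
  by (intro infinitely_differentiable_onI[where w = "\<lambda>k x. (deriv ^^ k) u x + c * (deriv ^^ k) v x"])
    (auto simp: infinitely_differentiable_on_def intro!: derivative_eq_intros)

lemma infinitely_differentiable_on_UNIV_periodic:
  assumes G: "infinitely_differentiable_on G UNIV" and per: "\<And>x. G (x + p) = G x"
  shows "(deriv ^^ k) G (x + p) = (deriv ^^ k) G x"
proof (rule sym, rule higher_deriv_eq_derivative_chain[where S = UNIV and w = "\<lambda>k x. (deriv ^^ k) G (x + p)"])
  fix k and y :: real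
  have "((deriv ^^ k) G has_real_derivative (deriv ^^ Suc k) G (y + p)) (at (y + p))"
    using G by (simp add: infinitely_differentiable_on_def del: funpow.simps)
  from DERIV_chain2[OF this DERIV_add[OF DERIV_ident DERIV_const[of p]]]
  show "((\<lambda>x. (deriv ^^ k) G (x + p)) has_real_derivative (deriv ^^ Suc k) G (y + p)) (at y)"
    by simp
qed (simp_all add: per)

lemma holomorphic_real_restriction:
  fixes F :: "complex \<Rightarrow> complex" and G :: "real \<Rightarrow> real"
  assumes F: "F holomorphic_on T" and T: "open T" and S: "open S" and ST: "of_real ` S \<subseteq> T"
    and eq: "\<And>x. x \<in> S \<Longrightarrow> F (of_real x) = of_real (G x)"
  shows "infinitely_differentiable_on G S"
    and "\<And>x. x \<in> S \<Longrightarrow> deriv F (of_real x) = of_real (deriv G x)"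
proof -
  have F_deriv: "((\<lambda>t. (deriv ^^ k) F (of_real t)) has_vector_derivative (deriv ^^ Suc k) F (of_real x)) (at x)"
    if "x \<in> S" for k x
  proof -
    have "(deriv ^^ k) F holomorphic_on T" using F T by (rule holomorphic_higher_deriv)
    hence "((deriv ^^ k) F has_field_derivative deriv ((deriv ^^ k) F) (of_real x)) (at (of_real x))"
      using T ST that by (meson DERIV_deriv_iff_field_differentiable holomorphic_on_imp_differentiable_at image_subset_iff)
    thus ?thesis using has_vector_derivative_real_field by fastforce
  qed
  define w where "w k x = Re ((deriv ^^ k) F (of_real x))" for k x
  have chain: "(w k has_real_derivative w (Suc k) x) (at x)" if "x \<in> S" for k x
    unfolding w_def using has_field_derivative_Re[OF F_deriv[OF that]] by simp
  have G_w: "G x = w 0 x" if "x \<in> S" for x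
    using eq[OF that] by (simp add: w_def)
  show G: "infinitely_differentiable_on G S"
    by (rule infinitely_differentiable_onI[OF S chain G_w])
  fix x assume x: "x \<in> S"
  have "((\<lambda>t. F (of_real t)) has_vector_derivative deriv F (of_real x)) (at x)"
    using F_deriv[OF x, of 0] by simp
  hence "((\<lambda>t. of_real (G t)) has_vector_derivative deriv F (of_real x)) (at x)"
    by (rule has_vector_derivative_transform_within_open[OF _ S x]) (simp add: eq)
  moreover have "((deriv ^^ 0) G has_real_derivative (deriv ^^ Suc 0) G x) (at x)"
    using G x unfolding infinitely_differentiable_on_def by blast
  hence "((\<lambda>t. complex_of_real (G t)) has_vector_derivative of_real (deriv G x)) (at x)"
    by (intro has_vector_derivative_of_real) simp
  ultimately show "deriv F (of_real x) = of_real (deriv G x)"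
    by (rule vector_derivative_unique_at)
qed

definition sinc :: "complex \<Rightarrow> complex" where
  "sinc z = (if z = 0 then 1 else sin z / z)"

lemma holomorphic_on_sinc: "sinc holomorphic_on A"
proof -
  have "deriv sin (0 :: complex) = 1"
    by (rule DERIV_imp_deriv) (auto intro!: derivative_eq_intros)
  hence eq: "(\<lambda>z. if z = 0 then deriv sin 0 else (sin z - sin 0) / (z - 0)) = sinc"
    by (auto simp: sinc_def)
  have "(\<lambda>z. if z = 0 then deriv sin 0 else (sin z - sin 0) / (z - 0)) holomorphic_on UNIV"
    by (rule pole_lemma) (auto intro: holomorphic_intros)
  hence "sinc holomorphic_on UNIV" by (simp only: eq)
  thus ?thesis by (rule holomorphic_on_subset) simp
qed

lemma has_field_derivative_sinc: "(sinc has_field_derivative deriv sinc z) (at z)"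
  using holomorphic_on_sinc[of UNIV]
  by (meson DERIV_deriv_iff_field_differentiable holomorphic_on_imp_differentiable_at open_UNIV UNIV_I)

lemma has_field_derivative_sinc_chain [derivative_intros]:
  "(g has_field_derivative g') (at x) \<Longrightarrow>
     ((\<lambda>z. sinc (g z)) has_field_derivative deriv sinc (g x) * g') (at x)"
  using DERIV_chain2[OF has_field_derivative_sinc] by blast

lemma sinc_minus: "sinc (- z) = sinc z"
  by (simp add: sinc_def)

lemma deriv_sinc_0: "deriv sinc 0 = 0"
proof -
  have "((\<lambda>z. sinc (- z)) has_field_derivative deriv sinc 0 * (- 1)) (at 0)"
    using DERIV_chain2[OF has_field_derivative_sinc[of "- 0"] DERIV_minus[OF DERIV_ident]] by simp
  hence "(sinc has_field_derivative - deriv sinc 0) (at 0)" by (simp add: sinc_minus)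
  with has_field_derivative_sinc[of 0] have "deriv sinc 0 = - deriv sinc 0" by (rule DERIV_unique)
  thus ?thesis by simp
qed

lemma sinc_nonzero:
  assumes "norm z < pi"
  shows "sinc z \<noteq> 0"
proof
  assume h: "sinc z = 0"
  hence "z \<noteq> 0" "sin z = 0" by (auto simp: sinc_def split: if_splits)
  then obtain n :: int where n: "z = of_real (of_int n * pi)" by (auto simp: sin_eq_0)
  with assms have "\<bar>of_int n\<bar> < (1::real)" by (simp add: norm_mult)
  hence "n = 0" by linarith
  with n \<open>z \<noteq> 0\<close> show False by simp
qed

lemma eventually_at_if_eventually_nhds:
  "eventually P (nhds x) \<Longrightarrow> eventually P (at x within S)"
  by (auto simp: eventually_at_filter elim: eventually_mono)

lemma tendsto_taylor2_quotient:
  fixes g g' g'' :: "real \<Rightarrow> real"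
  assumes g': "\<forall>\<^sub>F x in nhds 0. (g has_real_derivative g' x) (at x)"
    and g'': "\<forall>\<^sub>F x in nhds 0. (g' has_real_derivative g'' x) (at x)"
    and cont: "isCont g'' 0"
  shows "((\<lambda>x. (g x - g 0 - g' 0 * x) / x\<^sup>2) \<longlongrightarrow> g'' 0 / 2) (at 0)"
proof (rule lhopital[where f' = "\<lambda>x. g' x - g' 0" and g' = "\<lambda>x. 2 * x"])
  have "isCont g 0" "isCont g' 0"
    using eventually_nhds_x_imp_x[OF g'] eventually_nhds_x_imp_x[OF g''] by (auto dest: DERIV_isCont)
  thus "((\<lambda>x. g x - g 0 - g' 0 * x) \<longlongrightarrow> 0) (at 0)"
    unfolding isCont_def by (auto intro!: tendsto_eq_intros)
  show "((\<lambda>x. (g' x - g' 0) / (2 * x)) \<longlongrightarrow> g'' 0 / 2) (at 0)"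
  proof (rule lhopital[where f' = g'' and g' = "\<lambda>x. 2"])
    show "((\<lambda>x. g' x - g' 0) \<longlongrightarrow> 0) (at 0)"
      using \<open>isCont g' 0\<close> unfolding isCont_def by (auto intro!: tendsto_eq_intros)
    show "\<forall>\<^sub>F x in at 0. ((\<lambda>x. g' x - g' 0) has_real_derivative g'' x) (at x)"
      using eventually_at_if_eventually_nhds[OF g''] by eventually_elim (auto intro!: derivative_eq_intros)
    show "((\<lambda>x. g'' x / 2) \<longlongrightarrow> g'' 0 / 2) (at 0)"
      using cont unfolding isCont_def by (auto intro!: tendsto_eq_intros)
    show "((\<lambda>x. 2 * x) \<longlongrightarrow> 0) (at (0::real))"
      by (intro tendsto_mult_right_zero tendsto_ident_at)
  qed (auto simp: eventually_at_filter intro!: derivative_eq_intros)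
  show "\<forall>\<^sub>F x in at 0. ((\<lambda>x. g x - g 0 - g' 0 * x) has_real_derivative g' x - g' 0) (at x)"
    using eventually_at_if_eventually_nhds[OF g'] by eventually_elim (auto intro!: derivative_eq_intros)
  show "\<forall>\<^sub>F x in at 0. ((\<lambda>x. x\<^sup>2) has_real_derivative 2 * x) (at x)"
    using DERIV_pow[of 2] by (intro always_eventually) simp
qed (auto simp: eventually_at_filter intro!: tendsto_eq_intros)

lemma removable_double_zero:
  assumes G: "G holomorphic_on ball 0 r" and r: "r > 0" and G0: "G 0 = 0" and G'0: "deriv G 0 = 0"
  obtains Q where "Q holomorphic_on ball 0 r" "\<And>z. z \<noteq> 0 \<Longrightarrow> Q z = G z / z\<^sup>2"
proof
  define G1 where "G1 z = (if z = 0 then deriv G 0 else (G z - G 0) / (z - 0))" for z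
  have "G1 holomorphic_on ball 0 r"
    unfolding G1_def[abs_def] by (rule pole_lemma[OF G]) (use r in auto)
  thus "(\<lambda>z. if z = 0 then deriv G1 0 else (G1 z - G1 0) / (z - 0)) holomorphic_on ball 0 r"
    by (rule pole_lemma) (use r in auto)
  show "(if z = 0 then deriv G1 0 else (G1 z - G1 0) / (z - 0)) = G z / z\<^sup>2" if "z \<noteq> 0" for z
    using that by (simp add: G1_def G0 G'0 power2_eq_square)
qed

lemma tendsto_integral_symmetric_0:
  fixes g :: "real \<Rightarrow> real"
  assumes cont: "\<And>x. isCont g x"
  shows "((\<lambda>e. integral {-e..e} g) \<longlongrightarrow> 0) (at_right 0)"
proof -
  have "compact (g ` {-1..1})"
    by (intro compact_continuous_image continuous_at_imp_continuous_on ballI cont) simp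
  then obtain B where B: "\<And>x. x \<in> {-1..1} \<Longrightarrow> \<bar>g x\<bar> \<le> B"
    by (fastforce dest!: compact_imp_bounded simp: bounded_iff)
  have "B \<ge> 0" using B[of 0] by simp
  have "eventually (\<lambda>e :: real. e \<in> {0<..<1}) (at_right 0)"
    by (intro eventually_at_right_real) auto
  hence "\<forall>\<^sub>F e in at_right 0. norm (integral {-e..e} g) \<le> B * (2 * e)"
  proof eventually_elim
    case (elim e)
    have g_int: "(g has_integral integral {-e..e} g) {-e..e}"
      by (intro integrable_integral integrable_continuous_real continuous_at_imp_continuous_on ballI cont)
    have "norm (g x) \<le> B" if "x \<in> {-e..e} - {}" for x using that elim B by auto
    from has_integral_bound_real[OF \<open>B \<ge> 0\<close> finite.emptyI g_int this] elim show ?case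
      by (simp add: content_real)
  qed
  moreover have "((\<lambda>e. B * (2 * e)) \<longlongrightarrow> 0) (at_right 0)"
    by (auto intro!: tendsto_eq_intros)
  ultimately show ?thesis by (rule Lim_null_comparison)
qed

lemma bigo_powr_if_power_bound:
  fixes E :: "nat \<Rightarrow> real"
  assumes a: "a > 0" and mu: "0 < \<mu>" "\<mu> \<le> real m"
    and bound: "\<And>n. n \<ge> 1 \<Longrightarrow> \<bar>E n\<bar> \<le> C * (a / n) ^ m"
  shows "E \<in> O[sequentially](\<lambda>n. (a / n) powr \<mu>)"
proof (rule bigoI[where c = "\<bar>C\<bar>"])
  show "\<forall>\<^sub>F n in sequentially. norm (E n) \<le> \<bar>C\<bar> * norm ((a / n) powr \<mu>)"
    using eventually_ge_at_top[of "max 1 (nat \<lceil>a\<rceil>)"]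
  proof eventually_elim
    case (elim n)
    define h where "h = a / n"
    have "n \<ge> 1" "a \<le> real n" using elim by linarith+
    hence h: "0 < h" "h \<le> 1" using a by (auto simp: h_def field_simps)
    have "norm (E n) \<le> C * h ^ m" using bound \<open>n \<ge> 1\<close> by (simp add: h_def)
    also have "\<dots> \<le> \<bar>C\<bar> * h powr real m"
      using h by (simp add: powr_realpow mult_right_mono)
    also have "\<dots> \<le> \<bar>C\<bar> * h powr \<mu>"
      using h mu by (intro mult_left_mono powr_mono') auto
    finally show ?case using h by (simp add: h_def)
  qed
qed

section \<open>The regular part of \<open>f\<close>\<close>

locale finite_part_setting =
  fixes a \<rho> :: real and f \<phi> :: "real \<Rightarrow> real" and coeff :: "nat \<Rightarrow> real"
  assumes a_pos: "a > 0"
    and periodic: "\<And>x. f (x + 2 * a) = f x"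
    and smooth: "smooth_on f (- {2 * a * real_of_int k | k. True})"
    and rho_pos: "\<rho> > 0" and rho_le_a: "\<rho> \<le> a"
    and power_series: "\<And>y. \<bar>y\<bar> < \<rho> \<Longrightarrow> (\<lambda>k. coeff k * y ^ k) sums \<phi> y"
    and near_0: "\<And>x. 0 < \<bar>x\<bar> \<Longrightarrow> \<bar>x\<bar> < \<rho> \<Longrightarrow> f x = \<phi> x / x\<^sup>2"
begin

definition \<omega> :: real where "\<omega> = pi / (2 * a)"

definition poles :: "real set" where "poles = {2 * a * real_of_int k | k. True}"

text \<open>
  \<open>\<omega>\<close> is chosen so that both functions below are \<open>2a\<close>-periodic with poles exactly at \<open>2a\<int>\<close>;
  their principal parts at \<open>0\<close> are \<open>1/x\<^sup>2\<close> and \<open>1/x\<close>.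
\<close>

definition double_pole :: "real \<Rightarrow> real" where
  "double_pole x = \<omega>\<^sup>2 / (sin (\<omega> * x))\<^sup>2"

definition simple_pole :: "real \<Rightarrow> real" where
  "simple_pole x = \<omega> * cos (\<omega> * x) / sin (\<omega> * x)"

lemma omega_pos: "\<omega> > 0"
  using a_pos by (simp add: \<omega>_def)

lemma omega_a: "\<omega> * a = pi / 2"
  using a_pos by (simp add: \<omega>_def)

lemma sin_omega_eq_0_iff: "sin (\<omega> * x) = 0 \<longleftrightarrow> x \<in> poles"
proof
  assume "sin (\<omega> * x) = 0"
  then obtain k :: int where "\<omega> * x = of_int k * pi" by (auto simp: sin_zero_iff_int2)
  hence "x = 2 * a * of_int k" using a_pos by (simp add: \<omega>_def field_simps)
  thus "x \<in> poles" by (auto simp: poles_def)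
next
  assume "x \<in> poles"
  then obtain k where "x = 2 * a * of_int k" by (auto simp: poles_def)
  hence "\<omega> * x = of_int k * pi" using a_pos by (simp add: \<omega>_def)
  thus "sin (\<omega> * x) = 0" by (simp add: sin_zero_iff_int2)
qed

lemma open_compl_poles: "open (- poles)"
proof -
  have "- poles = {x. sin (\<omega> * x) \<noteq> 0}" by (auto simp: sin_omega_eq_0_iff)
  thus ?thesis by (auto intro!: open_Collect_neq continuous_intros)
qed

lemma sin_omega_pos:
  assumes "0 < x" "x \<le> a"
  shows "sin (\<omega> * x) > 0"
proof (rule sin_gt_zero)
  have "\<omega> * x \<le> \<omega> * a" using assms omega_pos by simp
  thus "\<omega> * x < pi" using omega_a pi_gt_zero by linarith
qed (use assms omega_pos in simp)

lemma sin_omega_neg: "- a \<le> x \<Longrightarrow> x < 0 \<Longrightarrow> sin (\<omega> * x) < 0"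
  using sin_omega_pos[of "- x"] by simp

lemma not_in_poles: "0 < \<bar>x\<bar> \<Longrightarrow> \<bar>x\<bar> \<le> a \<Longrightarrow> x \<notin> poles"
  using sin_omega_pos[of x] sin_omega_neg[of x] by (auto simp: sin_omega_eq_0_iff[symmetric] abs_if split: if_splits)

lemma sin_omega_shift: "sin (\<omega> * (x + 2 * a)) = - sin (\<omega> * x)"
  using a_pos by (simp add: \<omega>_def distrib_left sin_add)

lemma cos_omega_shift: "cos (\<omega> * (x + 2 * a)) = - cos (\<omega> * x)"
  using a_pos by (simp add: \<omega>_def distrib_left cos_add)

lemma poles_shift: "x + 2 * a \<in> poles \<longleftrightarrow> x \<in> poles"
  by (simp add: sin_omega_eq_0_iff[symmetric] sin_omega_shift)

lemma double_pole_periodic: "double_pole (x + 2 * a) = double_pole x"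
  by (simp add: double_pole_def sin_omega_shift)

lemma simple_pole_periodic: "simple_pole (x + 2 * a) = simple_pole x"
  by (simp add: simple_pole_def sin_omega_shift cos_omega_shift)

lemma double_pole_minus: "double_pole (- x) = double_pole x"
  by (simp add: double_pole_def)

lemma simple_pole_minus: "simple_pole (- x) = - simple_pole x"
  by (simp add: simple_pole_def)

lemma sin_omega_of_real: "sin (of_real \<omega> * of_real x) = (of_real (sin (\<omega> * x)) :: complex)"
  and cos_omega_of_real: "cos (of_real \<omega> * of_real x) = (of_real (cos (\<omega> * x)) :: complex)"
  by (simp_all flip: of_real_mult add: sin_of_real cos_of_real)

definition Phi :: "complex \<Rightarrow> complex" where
  "Phi z = (\<Sum>k. of_real (coeff k) * z ^ k)"

lemma summable_Phi:
  fixes z :: complex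
  assumes z: "norm z < \<rho>"
  shows "summable (\<lambda>k. of_real (coeff k) * z ^ k)"
proof -
  obtain y where y: "norm z < y" "y < \<rho>" using dense[OF z] by blast
  have y0: "y \<ge> 0" using y(1) norm_ge_zero[of z] by linarith
  hence "summable (\<lambda>k. complex_of_real (coeff k * y ^ k))"
    using y(2) by (simp only: summable_of_real_iff) (intro sums_summable[OF power_series], simp)
  hence "summable (\<lambda>k. of_real (coeff k) * complex_of_real y ^ k)" by simp
  moreover have "norm z < norm (complex_of_real y)" using y y0 by simp
  ultimately show ?thesis by (rule powser_inside)
qed

lemma holomorphic_on_Phi: "Phi holomorphic_on ball 0 \<rho>"
proof -
  have "\<exists>D. (Phi has_field_derivative D) (at z)" if "z \<in> ball 0 \<rho>" for z
    unfolding Phi_def[abs_def] using that summable_Phi termdiffs_strong'[of \<rho> "\<lambda>k. of_real (coeff k)" z]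
    by auto
  thus ?thesis by (simp add: holomorphic_on_open)
qed

lemma Phi_of_real: "\<bar>y\<bar> < \<rho> \<Longrightarrow> Phi (of_real y) = of_real (\<phi> y)"
  using sums_of_real[OF power_series, where 'a = complex]
  by (simp add: Phi_def sums_iff)

lemma infinitely_differentiable_on_phi: "infinitely_differentiable_on \<phi> {-\<rho><..<\<rho>}"
  and deriv_Phi_0: "deriv Phi 0 = of_real (deriv \<phi> 0)"
proof -
  have sub: "of_real ` {-\<rho><..<\<rho>} \<subseteq> ball (0 :: complex) \<rho>" by auto
  have eq: "\<And>x. x \<in> {-\<rho><..<\<rho>} \<Longrightarrow> Phi (of_real x) = of_real (\<phi> x)"
    by (intro Phi_of_real) auto
  note R = holomorphic_real_restriction[OF holomorphic_on_Phi open_ball open_greaterThanLessThan sub eq]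
  show "infinitely_differentiable_on \<phi> {-\<rho><..<\<rho>}" by (rule R(1))
  show "deriv Phi 0 = of_real (deriv \<phi> 0)" using R(2)[of 0] rho_pos by auto
qed

text \<open>The value at the poles is the limit computed in \<open>tendsto_reg_0\<close>.\<close>

definition reg :: "real \<Rightarrow> real" where
  "reg x = (if x \<in> poles then deriv (deriv \<phi>) 0 / 2 - \<phi> 0 * \<omega>\<^sup>2 / 3
            else f x - \<phi> 0 * double_pole x - deriv \<phi> 0 * simple_pole x)"

lemma reg_near_0:
  assumes "0 < \<bar>x\<bar>" "\<bar>x\<bar> < \<rho>"
  shows "reg x = \<phi> x / x\<^sup>2 - \<phi> 0 * double_pole x - deriv \<phi> 0 * simple_pole x"
  using assms rho_le_a not_in_poles[of x] near_0[of x] by (simp add: reg_def)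

lemma tendsto_double_pole_remainder: "((\<lambda>x. 1 / x\<^sup>2 - double_pole x) \<longlongrightarrow> - (\<omega>\<^sup>2 / 3)) (at 0)"
  using omega_pos unfolding double_pole_def by real_asymp (simp_all add: field_simps power2_eq_square)

lemma tendsto_simple_pole_remainder: "((\<lambda>x. 1 / x - simple_pole x) \<longlongrightarrow> 0) (at 0)"
  using omega_pos unfolding simple_pole_def by real_asymp

lemma tendsto_phi_taylor_quotient:
  "((\<lambda>x. (\<phi> x - \<phi> 0 - deriv \<phi> 0 * x) / x\<^sup>2) \<longlongrightarrow> deriv (deriv \<phi>) 0 / 2) (at 0)"
proof (rule tendsto_taylor2_quotient)
  have near: "\<forall>\<^sub>F x in nhds 0. x \<in> {-\<rho><..<\<rho>}"
    using rho_pos by (intro eventually_nhds_in_open) auto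
  have d: "((deriv ^^ k) \<phi> has_real_derivative (deriv ^^ Suc k) \<phi> x) (at x)"
    if "x \<in> {-\<rho><..<\<rho>}" for k x
    using infinitely_differentiable_on_phi that unfolding infinitely_differentiable_on_def by blast
  show "\<forall>\<^sub>F x in nhds 0. (\<phi> has_real_derivative deriv \<phi> x) (at x)"
    using near by eventually_elim (use d[of _ 0] in simp)
  show "\<forall>\<^sub>F x in nhds 0. (deriv \<phi> has_real_derivative deriv (deriv \<phi>) x) (at x)"
    using near by eventually_elim (use d[of _ 1] in simp)
  show "isCont (deriv (deriv \<phi>)) 0"
    using d[of 0 2] rho_pos by (auto simp: numeral_2_eq_2 dest: DERIV_isCont)
qed

lemma tendsto_reg_0: "(reg \<longlongrightarrow> reg 0) (at 0)"
proof -
  have "((\<lambda>x. (\<phi> x - \<phi> 0 - deriv \<phi> 0 * x) / x\<^sup>2 + \<phi> 0 * (1 / x\<^sup>2 - double_pole x)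
              + deriv \<phi> 0 * (1 / x - simple_pole x))
         \<longlongrightarrow> deriv (deriv \<phi>) 0 / 2 + \<phi> 0 * - (\<omega>\<^sup>2 / 3) + deriv \<phi> 0 * 0) (at 0)"
    by (intro tendsto_intros tendsto_phi_taylor_quotient tendsto_double_pole_remainder
          tendsto_simple_pole_remainder)
  moreover have "\<forall>\<^sub>F x in at 0. x \<in> {-\<rho><..<\<rho>} \<and> x \<noteq> 0"
    using rho_pos by (intro eventually_conj eventually_at_in_open' eventually_neq_at_within) auto
  hence "\<forall>\<^sub>F x in at 0. (\<phi> x - \<phi> 0 - deriv \<phi> 0 * x) / x\<^sup>2 + \<phi> 0 * (1 / x\<^sup>2 - double_pole x)
                          + deriv \<phi> 0 * (1 / x - simple_pole x) = reg x"
  proof eventually_elim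
    case (elim x)
    hence r: "reg x = \<phi> x / x\<^sup>2 - \<phi> 0 * double_pole x - deriv \<phi> 0 * simple_pole x"
      by (intro reg_near_0) auto
    show ?case unfolding r using elim by (simp add: field_simps power2_eq_square)
  qed
  moreover have "0 \<in> poles" by (auto simp: poles_def)
  ultimately show ?thesis by (auto simp: reg_def elim: Lim_transform_eventually)
qed

text \<open>\<open>z\<^sup>2 reg z\<close> near \<open>0\<close>, written with \<open>sinc\<close> so that it is visibly holomorphic at \<open>0\<close>.\<close>

definition reg_numerator :: "complex \<Rightarrow> complex" where
  "reg_numerator z = Phi z - of_real (\<phi> 0) / (sinc (of_real \<omega> * z))\<^sup>2
                       - of_real (deriv \<phi> 0) * (z * cos (of_real \<omega> * z) / sinc (of_real \<omega> * z))"

lemma sinc_omega_nonzero: "norm z < a \<Longrightarrow> sinc (of_real \<omega> * z) \<noteq> 0"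
proof (rule sinc_nonzero)
  assume "norm z < a"
  hence "norm (of_real \<omega> * z) < \<omega> * a" using omega_pos by (simp add: norm_mult)
  thus "norm (of_real \<omega> * z) < pi" using omega_a pi_gt_zero by linarith
qed

lemma holomorphic_on_reg_numerator: "reg_numerator holomorphic_on ball 0 \<rho>"
proof -
  have "Phi holomorphic_on ball 0 \<rho>" by (rule holomorphic_on_Phi)
  moreover have "(\<lambda>z. sinc (of_real \<omega> * z)) holomorphic_on ball 0 \<rho>"
    using holomorphic_on_compose[of "\<lambda>z. of_real \<omega> * z" _ sinc] holomorphic_on_sinc
    by (auto simp: o_def intro: holomorphic_intros)
  moreover have "sinc (of_real \<omega> * z) \<noteq> 0" if "z \<in> ball 0 \<rho>" for z
    using that rho_le_a by (intro sinc_omega_nonzero) auto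
  ultimately show ?thesis
    unfolding reg_numerator_def[abs_def] by (intro holomorphic_intros) auto
qed

lemma reg_numerator_0: "reg_numerator 0 = 0"
  using Phi_of_real[of 0] rho_pos by (simp add: reg_numerator_def sinc_def)

lemma deriv_reg_numerator_0: "deriv reg_numerator 0 = 0"
proof -
  have "(Phi has_field_derivative of_real (deriv \<phi> 0)) (at 0)"
    using holomorphic_on_Phi rho_pos deriv_Phi_0
    by (metis DERIV_deriv_iff_field_differentiable centre_in_ball holomorphic_on_imp_differentiable_at open_ball)
  moreover have "sinc 0 = 1" by (simp add: sinc_def)
  ultimately have "(reg_numerator has_field_derivative of_real (deriv \<phi> 0) - of_real (\<phi> 0) * 0 - of_real (deriv \<phi> 0) * 1) (at 0)"
    unfolding reg_numerator_def[abs_def]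
    by (auto intro!: derivative_eq_intros simp: deriv_sinc_0)
  thus ?thesis by (simp add: DERIV_imp_deriv)
qed

lemma reg_numerator_of_real:
  assumes x: "0 < \<bar>x\<bar>" "\<bar>x\<bar> < \<rho>"
  shows "reg_numerator (of_real x) = of_real (x\<^sup>2 * reg x)"
proof -
  define q where "q = sin (\<omega> * x) / (\<omega> * x)"
  have s: "sin (\<omega> * x) \<noteq> 0" using x rho_le_a not_in_poles[of x] sin_omega_eq_0_iff by auto
  have x0: "x \<noteq> 0" and "\<omega> * x \<noteq> 0" using x omega_pos by auto
  hence "sinc (of_real \<omega> * of_real x) = of_real q"
    by (simp add: q_def sinc_def sin_of_real[symmetric])
  hence "reg_numerator (of_real x) = of_real (\<phi> x - \<phi> 0 * (1 / q\<^sup>2) - deriv \<phi> 0 * (x * cos (\<omega> * x) / q))"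
    using x by (simp add: reg_numerator_def Phi_of_real cos_omega_of_real)
  also have "1 / q\<^sup>2 = x\<^sup>2 * double_pole x"
    using s x0 omega_pos by (simp add: q_def double_pole_def power_divide power_mult_distrib)
  also have "x * cos (\<omega> * x) / q = x\<^sup>2 * simple_pole x"
    using s x0 omega_pos by (simp add: q_def simple_pole_def power2_eq_square)
  also have "\<phi> x = x\<^sup>2 * (\<phi> x / x\<^sup>2)" using x0 by simp
  finally show ?thesis using x by (simp add: reg_near_0 algebra_simps)
qed

lemma reg_holomorphic_extension:
  obtains R where "R holomorphic_on ball 0 \<rho>" "\<And>x. \<bar>x\<bar> < \<rho> \<Longrightarrow> R (of_real x) = of_real (reg x)"
proof -
  obtain R where R: "R holomorphic_on ball 0 \<rho>" and R_eq: "\<And>z. z \<noteq> 0 \<Longrightarrow> R z = reg_numerator z / z\<^sup>2"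
    using removable_double_zero[OF holomorphic_on_reg_numerator rho_pos reg_numerator_0 deriv_reg_numerator_0]
    by blast
  have R_real: "R (of_real x) = of_real (reg x)" if "0 < \<bar>x\<bar>" "\<bar>x\<bar> < \<rho>" for x
    using that by (simp add: R_eq reg_numerator_of_real)
  have "isCont R 0"
    using R rho_pos holomorphic_on_imp_continuous_on continuous_on_interior by fastforce
  hence "((\<lambda>t. R (of_real t)) \<longlongrightarrow> R (of_real 0)) (at (0 :: real))"
    by (intro isCont_tendsto_compose[OF _ tendsto_of_real] tendsto_ident_at) simp
  moreover have "((\<lambda>t. R (of_real t)) \<longlongrightarrow> of_real (reg 0)) (at (0 :: real))"
  proof (rule Lim_transform_eventually[OF tendsto_of_real[OF tendsto_reg_0]])
    have "\<forall>\<^sub>F t in at 0. t \<in> {-\<rho><..<\<rho>} \<and> t \<noteq> (0::real)"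
      using rho_pos by (intro eventually_conj eventually_at_in_open' eventually_neq_at_within) auto
    thus "\<forall>\<^sub>F t in at 0. of_real (reg t) = R (of_real t)"
      by eventually_elim (auto simp: R_real)
  qed
  ultimately have R0: "R (of_real 0) = of_real (reg 0)" using tendsto_unique[OF at_neq_bot] by blast
  show ?thesis
  proof (rule that[OF R])
    show "R (of_real x) = of_real (reg x)" if "\<bar>x\<bar> < \<rho>" for x
      using R_real[of x] R0 that by (cases "x = 0") auto
  qed
qed

lemma of_real_compl_poles: "of_real ` (- poles) \<subseteq> {z :: complex. sin (of_real \<omega> * z) \<noteq> 0}"
proof
  fix z :: complex assume "z \<in> of_real ` (- poles)"
  then obtain x where "x \<notin> poles" "z = of_real x" by auto
  thus "z \<in> {z. sin (of_real \<omega> * z) \<noteq> 0}"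
    by (simp add: sin_omega_of_real sin_omega_eq_0_iff)
qed

lemma open_sin_omega_nonzero: "open {z. sin (of_real \<omega> * z :: complex) \<noteq> 0}"
  by (intro open_Collect_neq continuous_intros)

lemma infinitely_differentiable_on_double_pole: "infinitely_differentiable_on double_pole (- poles)"
proof -
  define F :: "complex \<Rightarrow> complex" where "F z = of_real \<omega> ^ 2 / (sin (of_real \<omega> * z))\<^sup>2" for z
  have hol: "F holomorphic_on {z. sin (of_real \<omega> * z) \<noteq> 0}"
    unfolding F_def by (intro holomorphic_intros) auto
  have eq: "F (of_real x) = of_real (double_pole x)" if "x \<in> - poles" for x
    unfolding F_def by (simp only: double_pole_def sin_omega_of_real of_real_divide of_real_power)
  show ?thesis
    by (rule holomorphic_real_restriction(1)[OF hol open_sin_omega_nonzero open_compl_poles of_real_compl_poles eq])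
qed

lemma infinitely_differentiable_on_simple_pole: "infinitely_differentiable_on simple_pole (- poles)"
proof -
  define F :: "complex \<Rightarrow> complex" where "F z = of_real \<omega> * cos (of_real \<omega> * z) / sin (of_real \<omega> * z)" for z
  have hol: "F holomorphic_on {z. sin (of_real \<omega> * z) \<noteq> 0}"
    unfolding F_def by (intro holomorphic_intros) auto
  have eq: "F (of_real x) = of_real (simple_pole x)" if "x \<in> - poles" for x
    unfolding F_def by (simp only: simple_pole_def sin_omega_of_real cos_omega_of_real of_real_divide of_real_mult)
  show ?thesis
    by (rule holomorphic_real_restriction(1)[OF hol open_sin_omega_nonzero open_compl_poles of_real_compl_poles eq])
qed

lemma reg_periodic: "reg (x + 2 * a) = reg x"
  by (simp add: reg_def poles_shift periodic double_pole_periodic simple_pole_periodic)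

lemma infinitely_differentiable_on_reg_off_poles: "infinitely_differentiable_on reg (- poles)"
proof -
  have "infinitely_differentiable_on f (- poles)"
    using smooth_on_imp_infinitely_differentiable_on[OF smooth[folded poles_def] open_compl_poles] .
  hence "infinitely_differentiable_on
           (\<lambda>x. (\<lambda>x. f x + (- \<phi> 0) * double_pole x) x + (- deriv \<phi> 0) * simple_pole x) (- poles)"
    by (intro infinitely_differentiable_on_add_scaled open_compl_poles
          infinitely_differentiable_on_double_pole infinitely_differentiable_on_simple_pole)
  thus ?thesis by (rule infinitely_differentiable_on_cong[OF open_compl_poles]) (simp add: reg_def)
qed

lemma infinitely_differentiable_on_reg_near_pole:
  assumes "x \<in> poles"
  shows "infinitely_differentiable_on reg (ball x \<rho>)"
proof -
  interpret periodic_fun_simple reg "2 * a" by standard (rule reg_periodic)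
  obtain k where k: "x = 2 * a * of_int k" using assms by (auto simp: poles_def)
  obtain R where R: "R holomorphic_on ball 0 \<rho>" and R_eq: "\<And>t. \<bar>t\<bar> < \<rho> \<Longrightarrow> R (of_real t) = of_real (reg t)"
    using reg_holomorphic_extension by blast
  show ?thesis
  proof (rule holomorphic_real_restriction(1)[where F = "\<lambda>z. R (z - of_real x)"])
    have "(R \<circ> (\<lambda>z. z - of_real x)) holomorphic_on ball (of_real x) \<rho>"
    proof (rule holomorphic_on_compose)
      show "R holomorphic_on (\<lambda>z. z - of_real x) ` ball (of_real x) \<rho>"
        by (rule holomorphic_on_subset[OF R]) (auto simp: dist_norm norm_minus_commute)
    qed (intro holomorphic_intros)
    thus "(\<lambda>z. R (z - of_real x)) holomorphic_on ball (of_real x) \<rho>" by (simp add: o_def)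
    show "R (of_real t - of_real x) = of_real (reg t)" if "t \<in> ball x \<rho>" for t
    proof -
      have "R (of_real (t - x)) = of_real (reg (t - x))"
        using that by (intro R_eq) (simp add: dist_real_def)
      also have "reg (t - x) = reg t"
        using minus_of_int[of t k] k by (simp add: mult_ac)
      finally show ?thesis by simp
    qed
  qed (auto simp: dist_of_real)
qed

lemma infinitely_differentiable_on_reg: "infinitely_differentiable_on reg UNIV"
  unfolding infinitely_differentiable_on_def
proof (intro allI ballI)
  fix k x
  show "((deriv ^^ k) reg has_real_derivative (deriv ^^ Suc k) reg x) (at x)"
  proof (cases "x \<in> poles")
    case True
    have "x \<in> ball x \<rho>" using rho_pos by simp
    with infinitely_differentiable_on_reg_near_pole[OF True] show ?thesis
      unfolding infinitely_differentiable_on_def by blast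
  next
    case False
    hence "x \<in> - poles" by simp
    with infinitely_differentiable_on_reg_off_poles show ?thesis
      unfolding infinitely_differentiable_on_def by blast
  qed
qed

subsection \<open>The finite-part integral\<close>

lemma isCont_reg: "isCont reg x"
proof -
  have "((deriv ^^ 0) reg has_real_derivative (deriv ^^ Suc 0) reg x) (at x)"
    using infinitely_differentiable_on_reg unfolding infinitely_differentiable_on_def by blast
  thus ?thesis by (auto dest: DERIV_isCont)
qed

lemma f_decomposition:
  "0 < \<bar>x\<bar> \<Longrightarrow> \<bar>x\<bar> \<le> a \<Longrightarrow> f x = reg x + \<phi> 0 * double_pole x + deriv \<phi> 0 * simple_pole x"
  using not_in_poles by (simp add: reg_def)

lemma has_real_derivative_simple_pole:
  assumes s: "sin (\<omega> * x) \<noteq> 0"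
  shows "(simple_pole has_real_derivative - double_pole x) (at x)"
proof -
  have dc: "((\<lambda>x. \<omega> * cos (\<omega> * x)) has_real_derivative \<omega> * (- sin (\<omega> * x) * \<omega>)) (at x)"
    by (auto intro!: derivative_eq_intros)
  have ds: "((\<lambda>x. sin (\<omega> * x)) has_real_derivative cos (\<omega> * x) * \<omega>) (at x)"
    by (auto intro!: derivative_eq_intros)
  have num: "\<omega> * (- sin (\<omega> * x) * \<omega>) * sin (\<omega> * x) - \<omega> * cos (\<omega> * x) * (cos (\<omega> * x) * \<omega>)
             = - \<omega>\<^sup>2"
  proof -
    have "w * (- s * w) * s - w * c * (c * w) = - w\<^sup>2 * (s\<^sup>2 + c\<^sup>2)" for w s c :: real
      by (simp add: algebra_simps power2_eq_square)
    thus ?thesis by (simp only: sin_cos_squared_add mult_1_right)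
  qed
  have "(simple_pole has_real_derivative
          (\<omega> * (- sin (\<omega> * x) * \<omega>) * sin (\<omega> * x) - \<omega> * cos (\<omega> * x) * (cos (\<omega> * x) * \<omega>))
            / (sin (\<omega> * x) * sin (\<omega> * x))) (at x)"
    unfolding simple_pole_def[abs_def] by (rule DERIV_divide[OF dc ds s])
  thus ?thesis unfolding num by (simp add: double_pole_def power2_eq_square)
qed

lemma has_integral_double_pole:
  assumes "0 < e" "e \<le> a"
  shows "(double_pole has_integral simple_pole e) {e..a}"
proof -
  have "(double_pole has_integral (- simple_pole a - - simple_pole e)) {e..a}"
  proof (rule fundamental_theorem_of_calculus)
    fix x assume "x \<in> {e..a}"
    hence "sin (\<omega> * x) \<noteq> 0" using assms sin_omega_pos[of x] by auto
    from DERIV_minus[OF has_real_derivative_simple_pole[OF this]]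
    show "((\<lambda>x. - simple_pole x) has_vector_derivative double_pole x) (at x within {e..a})"
      by (simp add: has_real_derivative_iff_has_vector_derivative[symmetric] has_field_derivative_at_within)
  qed (use assms in simp)
  moreover have "simple_pole a = 0" by (simp add: simple_pole_def omega_a)
  ultimately show ?thesis by simp
qed

lemma has_integral_simple_pole:
  assumes "0 < e" "e \<le> a"
  shows "(simple_pole has_integral - ln (sin (\<omega> * e))) {e..a}"
proof -
  have "(simple_pole has_integral (ln (sin (\<omega> * a)) - ln (sin (\<omega> * e)))) {e..a}"
  proof (rule fundamental_theorem_of_calculus)
    fix x assume "x \<in> {e..a}"
    hence "sin (\<omega> * x) > 0" using assms sin_omega_pos[of x] by auto
    hence "((\<lambda>x. ln (sin (\<omega> * x))) has_real_derivative cos (\<omega> * x) * (\<omega> * 1) / sin (\<omega> * x)) (at x)"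
      by (intro derivative_eq_intros refl) auto
    thus "((\<lambda>x. ln (sin (\<omega> * x))) has_vector_derivative simple_pole x) (at x within {e..a})"
      by (simp add: has_real_derivative_iff_has_vector_derivative[symmetric] has_field_derivative_at_within
                    simple_pole_def mult_ac)
  qed (use assms in simp)
  thus ?thesis by (simp add: omega_a)
qed

lemma integral_f_punctured:
  assumes e: "0 < e" "e \<le> a"
  shows "integral {-a..-e} f + integral {e..a} f
           = integral {-a..-e} reg + integral {e..a} reg + 2 * \<phi> 0 * simple_pole e"
proof -
  have reg_int: "(reg has_integral integral {l..u} reg) {l..u}" for l u
    by (intro integrable_integral integrable_continuous_real continuous_at_imp_continuous_on ballI isCont_reg)
  have "((\<lambda>x. double_pole (- x)) has_integral simple_pole e) {-a..-e}"
    using has_integral_double_pole[OF e] by simp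
  hence dp_left: "(double_pole has_integral simple_pole e) {-a..-e}"
    by (simp add: double_pole_minus)
  have "((\<lambda>x. - simple_pole (- x)) has_integral ln (sin (\<omega> * e))) {-a..-e}"
    using has_integral_neg[OF has_integral_simple_pole[OF e]]
      has_integral_reflect_real[where f = "\<lambda>x. - simple_pole x" and a = e and b = a] by simp
  hence sp_left: "(simple_pole has_integral ln (sin (\<omega> * e))) {-a..-e}"
    by (simp add: simple_pole_minus)
  have "((\<lambda>x. reg x + \<phi> 0 * double_pole x + deriv \<phi> 0 * simple_pole x) has_integral
          integral {e..a} reg + \<phi> 0 * simple_pole e + deriv \<phi> 0 * - ln (sin (\<omega> * e))) {e..a}"
    by (intro has_integral_add has_integral_mult_right reg_int has_integral_double_pole
          has_integral_simple_pole e)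
  hence "(f has_integral integral {e..a} reg + \<phi> 0 * simple_pole e + deriv \<phi> 0 * - ln (sin (\<omega> * e))) {e..a}"
    by (rule has_integral_eq[rotated]) (use e in \<open>auto simp: f_decomposition\<close>)
  note right = integral_unique[OF this]
  have "((\<lambda>x. reg x + \<phi> 0 * double_pole x + deriv \<phi> 0 * simple_pole x) has_integral
          integral {-a..-e} reg + \<phi> 0 * simple_pole e + deriv \<phi> 0 * ln (sin (\<omega> * e))) {-a..-e}"
    by (intro has_integral_add has_integral_mult_right reg_int dp_left sp_left)
  hence "(f has_integral integral {-a..-e} reg + \<phi> 0 * simple_pole e + deriv \<phi> 0 * ln (sin (\<omega> * e))) {-a..-e}"
    by (rule has_integral_eq[rotated]) (use e in \<open>auto simp: f_decomposition\<close>)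
  note left = integral_unique[OF this]
  show ?thesis unfolding left right by simp
qed

lemma hadamard_fp_has_value_reg: "hadamard_fp_has_value a f (\<phi> 0) (integral {-a..a} reg)"
proof -
  have "((\<lambda>e. 1 / e - simple_pole e) \<longlongrightarrow> 0) (at_right 0)"
    by (rule tendsto_mono[OF at_le tendsto_simple_pole_remainder]) simp
  hence lim: "((\<lambda>e. integral {-a..a} reg - integral {-e..e} reg - 2 * \<phi> 0 * (1 / e - simple_pole e))
               \<longlongrightarrow> integral {-a..a} reg - 0 - 2 * \<phi> 0 * 0) (at_right 0)"
    by (intro tendsto_diff tendsto_mult tendsto_const tendsto_integral_symmetric_0 isCont_reg)
  have "eventually (\<lambda>e :: real. e \<in> {0<..<a}) (at_right 0)"
    using a_pos by (intro eventually_at_right_real) auto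
  hence "\<forall>\<^sub>F e in at_right 0. integral {-a..a} reg - integral {-e..e} reg - 2 * \<phi> 0 * (1 / e - simple_pole e)
           = integral {-a..-e} f + integral {e..a} f - 2 * \<phi> 0 / e"
  proof eventually_elim
    case (elim e)
    have int: "reg integrable_on {l..u}" for l u
      by (intro integrable_continuous_real continuous_at_imp_continuous_on ballI isCont_reg)
    have "integral {-a..-e} reg + integral {-e..a} reg = integral {-a..a} reg"
      "integral {-e..e} reg + integral {e..a} reg = integral {-e..a} reg"
      using elim int by (auto intro!: Henstock_Kurzweil_Integration.integral_combine)
    moreover have "2 * \<phi> 0 * (1 / e - simple_pole e) = 2 * \<phi> 0 / e - 2 * \<phi> 0 * simple_pole e"
      by (simp add: algebra_simps)
    moreover have "0 < e" "e \<le> a" using elim by auto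
    ultimately show ?case using integral_f_punctured[of e] by linarith
  qed
  from Lim_transform_eventually[OF lim this] show ?thesis
    by (simp add: hadamard_fp_has_value_def)
qed

subsection \<open>The punctured trapezoidal sum\<close>

lemma omega_grid: "n \<ge> 1 \<Longrightarrow> \<omega> * (of_int i * (a / real n)) = pi * (of_int i / (2 * real n))"
  using a_pos by (simp add: \<omega>_def field_simps)

lemma sum_double_pole_grid:
  assumes n: "n \<ge> 1"
  shows "(\<Sum>i\<in>{- int n..int n - 1} - {0}. double_pole (of_int i * (a / n))) = \<omega>\<^sup>2 * ((4 * (real n)\<^sup>2 - 1) / 3)"
proof -
  have "(\<Sum>i\<in>{- int n..int n - 1} - {0}. double_pole (of_int i * (a / n)))
          = \<omega>\<^sup>2 * (\<Sum>i\<in>{- int n..int n - 1} - {0}. 1 / (sin (pi * (of_int i / (2 * real n))))\<^sup>2)"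
    unfolding sum_distrib_left double_pole_def omega_grid[OF n] by simp
  also have "(\<Sum>i\<in>{- int n..int n - 1} - {0}. 1 / (sin (pi * (of_int i / (2 * real n))))\<^sup>2)
               = (\<Sum>k = 1..2 * n - 1. 1 / (sin (pi * (real k / real (2 * n))))\<^sup>2)"
    by (rule sum_centered_grid_eq_sum_fractions[OF n]) simp
  also have "\<dots> = (real (2 * n) ^ 2 - 1) / 3"
    using n by (intro sum_inverse_sin_squared_fractions) simp
  finally show ?thesis by (simp add: power_mult_distrib)
qed

lemma sum_simple_pole_grid:
  assumes n: "n \<ge> 1"
  shows "(\<Sum>i\<in>{- int n..int n - 1} - {0}. simple_pole (of_int i * (a / n))) = 0"
proof -
  have "(\<Sum>i\<in>{- int n..int n - 1} - {0}. simple_pole (of_int i * (a / n)))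
          = \<omega> * (\<Sum>i\<in>{- int n..int n - 1} - {0}.
                   cos (pi * (of_int i / (2 * real n))) / sin (pi * (of_int i / (2 * real n))))"
    unfolding sum_distrib_left simple_pole_def omega_grid[OF n] by simp
  also have "(\<Sum>i\<in>{- int n..int n - 1} - {0}. cos (pi * (of_int i / (2 * real n))) / sin (pi * (of_int i / (2 * real n))))
               = (\<Sum>k = 1..2 * n - 1. cos (pi * (real k / real (2 * n))) / sin (pi * (real k / real (2 * n))))"
    by (rule sum_centered_grid_eq_sum_fractions[OF n]) simp
  also have "\<dots> = 0"
    using n by (intro sum_cot_fractions_eq_0) simp
  finally show ?thesis by simp
qed

lemma trap_Tn_remainder:
  assumes n: "n \<ge> 1"
  shows "trap_Tn a f n - pi\<^sup>2 / (3 * (a / n)) * \<phi> 0 + deriv (deriv \<phi>) 0 * (a / n) / 2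
           = a / n * (\<Sum>i\<in>{- int n..int n - 1}. reg (of_int i * (a / n)))"
proof -
  define h where "h = a / n"
  define G where "G = {- int n..int n - 1} - {0}"
  define S where "S = (\<Sum>i\<in>{- int n..int n - 1}. reg (of_int i * h))"
  have h: "h > 0" using a_pos n by (simp add: h_def)
  have "f (of_int i * h) = reg (of_int i * h) + \<phi> 0 * double_pole (of_int i * h)
                              + deriv \<phi> 0 * simple_pole (of_int i * h)" if "i \<in> G" for i
  proof (rule f_decomposition)
    have i: "- int n \<le> i" "i \<le> int n - 1" "i \<noteq> 0" using that by (auto simp: G_def)
    show "0 < \<bar>of_int i * h\<bar>" using i(3) h by simp
    have "- real n \<le> of_int i" using i(1) by linarith
    moreover have "of_int i \<le> real n" using i(2) by linarith
    ultimately have "\<bar>of_int i\<bar> * h \<le> real n * h" using h by (intro mult_right_mono) auto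
    moreover have "\<bar>of_int i * h\<bar> = \<bar>of_int i\<bar> * h" using h by (simp add: abs_mult)
    moreover have "real n * h = a" using n by (simp add: h_def)
    ultimately show "\<bar>of_int i * h\<bar> \<le> a" by linarith
  qed
  hence "(\<Sum>i\<in>G. f (of_int i * h)) = (\<Sum>i\<in>G. reg (of_int i * h))
           + \<phi> 0 * (\<Sum>i\<in>G. double_pole (of_int i * h)) + deriv \<phi> 0 * (\<Sum>i\<in>G. simple_pole (of_int i * h))"
    by (simp add: sum.distrib sum_distrib_left)
  also have "(\<Sum>i\<in>G. reg (of_int i * h)) = S - reg 0"
    using n by (simp add: S_def G_def sum_diff1)
  also have "reg 0 = deriv (deriv \<phi>) 0 / 2 - \<phi> 0 * \<omega>\<^sup>2 / 3"
    by (auto simp: reg_def poles_def)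
  finally have sum_f: "(\<Sum>i\<in>G. f (of_int i * h))
      = S - (deriv (deriv \<phi>) 0 / 2 - \<phi> 0 * \<omega>\<^sup>2 / 3) + \<phi> 0 * (\<omega>\<^sup>2 * ((4 * (real n)\<^sup>2 - 1) / 3))"
    using sum_double_pole_grid[OF n] sum_simple_pole_grid[OF n] by (simp add: G_def h_def)
  have pi_sq: "pi\<^sup>2 / (3 * h) = h * \<omega>\<^sup>2 * (4 * (real n)\<^sup>2) / 3"
    using a_pos n by (simp add: h_def \<omega>_def field_simps power2_eq_square)
  have T: "trap_Tn a f n = h * (\<Sum>i\<in>G. f (of_int i * h))"
    by (simp add: trap_Tn_def h_def G_def)
  show ?thesis unfolding h_def[symmetric] S_def[symmetric] pi_sq T sum_f
    by (simp add: field_simps)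
qed

lemma reg_trapezoidal_error:
  assumes m: "m \<ge> 1"
  obtains C where "\<And>n. n \<ge> 1 \<Longrightarrow>
    \<bar>a / n * (\<Sum>i\<in>{- int n..int n - 1}. reg (of_int i * (a / n))) - integral {-a..a} reg\<bar> \<le> C * (a / n) ^ m"
proof -
  interpret periodic_deriv_chain "\<lambda>k. (deriv ^^ k) reg" "2 * a"
  proof
    show "((deriv ^^ k) reg has_real_derivative (deriv ^^ Suc k) reg x) (at x)" for k x
      using infinitely_differentiable_on_reg unfolding infinitely_differentiable_on_def by blast
    show "(deriv ^^ k) reg (x + 2 * a) = (deriv ^^ k) reg x" for k x
      by (rule infinitely_differentiable_on_UNIV_periodic[OF infinitely_differentiable_on_reg reg_periodic])
  qed (use a_pos in simp)
  obtain C where C: "\<And>N x. N \<ge> 1 \<Longrightarrow>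
      \<bar>grid_sum N 0 x - integral {x..x + 2 * a} ((deriv ^^ 0) reg)\<bar> \<le> C * (2 * a / N) ^ m"
    using grid_sum_error[OF m] by blast
  show ?thesis
  proof (rule that)
    fix n :: nat assume n: "n \<ge> 1"
    have "2 * a / real (2 * n) = a / n" by simp
    hence "grid_sum (2 * n) 0 (- a) = a / n * (\<Sum>i\<in>{- int n..int n - 1}. reg (of_int i * (a / n)))"
      using sum_shifted_grid_eq_centered[OF n, of reg a] by (simp add: grid_sum_def)
    with C[of "2 * n" "- a"] n show "\<bar>a / n * (\<Sum>i\<in>{- int n..int n - 1}. reg (of_int i * (a / n)))
        - integral {-a..a} reg\<bar> \<le> C * (a / n) ^ m"
      by simp
  qed
qed

theorem trapezoidal_rule_expansion:
  "\<exists>I. hadamard_fp_has_value a f (\<phi> 0) I \<and>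
     (\<forall>\<mu>>0. (\<lambda>n. I - (trap_Tn a f n - pi\<^sup>2 / (3 * (a / real n)) * \<phi> 0
                          + deriv (deriv \<phi>) 0 * (a / real n) / 2))
             \<in> O[sequentially](\<lambda>n. (a / real n) powr \<mu>))"
proof (intro exI conjI allI impI)
  show "hadamard_fp_has_value a f (\<phi> 0) (integral {-a..a} reg)"
    by (rule hadamard_fp_has_value_reg)
  fix \<mu> :: real assume "\<mu> > 0"
  define m where "m = nat \<lceil>\<mu>\<rceil>"
  have "0 < \<lceil>\<mu>\<rceil>" using \<open>\<mu> > 0\<close> by simp
  hence m: "m \<ge> 1" "\<mu> \<le> real m" unfolding m_def by linarith+
  obtain C where C: "\<And>n. n \<ge> 1 \<Longrightarrow>
      \<bar>a / n * (\<Sum>i\<in>{- int n..int n - 1}. reg (of_int i * (a / n))) - integral {-a..a} reg\<bar> \<le> C * (a / n) ^ m"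
    using reg_trapezoidal_error[OF m(1)] by blast
  show "(\<lambda>n. integral {-a..a} reg - (trap_Tn a f n - pi\<^sup>2 / (3 * (a / real n)) * \<phi> 0
                          + deriv (deriv \<phi>) 0 * (a / real n) / 2))
             \<in> O[sequentially](\<lambda>n. (a / real n) powr \<mu>)"
  proof (rule bigo_powr_if_power_bound[OF a_pos \<open>\<mu> > 0\<close> m(2)])
    fix n :: nat assume n: "n \<ge> 1"
    show "\<bar>integral {-a..a} reg - (trap_Tn a f n - pi\<^sup>2 / (3 * (a / real n)) * \<phi> 0
              + deriv (deriv \<phi>) 0 * (a / real n) / 2)\<bar> \<le> C * (a / n) ^ m"
      unfolding trap_Tn_remainder[OF n] abs_minus_commute[of "integral {-a..a} reg"] by (rule C[OF n])
  qed
qed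

end

theorem mainTheorem1:
  fixes a \<delta> :: real and f \<phi> :: "real \<Rightarrow> real"
  assumes a_pos: "a > 0"
    and periodic: "\<And>x. f (x + 2 * a) = f x"
    and smooth: "smooth_on f (- {2 * a * real_of_int k | k. True})"
    and delta_pos: "\<delta> > 0"
    and analytic: "real_analytic_on \<phi> {-\<delta><..<\<delta>}"
    and near0: "\<And>x. 0 < \<bar>x\<bar> \<Longrightarrow> \<bar>x\<bar> < \<delta> \<Longrightarrow> f x = \<phi> x / x\<^sup>2"
  shows "\<exists>I. hadamard_fp_has_value a f (\<phi> 0) I \<and>
           (\<forall>\<mu>>0. (\<lambda>n. I - (trap_Tn a f n - pi\<^sup>2 / (3 * (a / real n)) * \<phi> 0
                                 + deriv (deriv \<phi>) 0 * (a / real n) / 2))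
                    \<in> O[sequentially](\<lambda>n. (a / real n) powr \<mu>))"
proof -
  obtain r coeff where r: "r > 0" and coeff: "\<And>y. \<bar>y - 0\<bar> < r \<Longrightarrow> (\<lambda>k. coeff k * (y - 0) ^ k) sums \<phi> y"
    using analytic delta_pos unfolding real_analytic_on_def by (metis greaterThanLessThan_iff neg_less_0_iff_less)
  interpret finite_part_setting a "min (min r \<delta>) a" f \<phi> coeff
    by standard (use assms r coeff in auto)
  show ?thesis by (rule trapezoidal_rule_expansion)
qed

end
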